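(* Let $\lambda,\mu$ be partitions with at most $m$ parts, each at most $m$, such that $\mu\subset\lambda^c$ and the skew partition $\lambda^c/\mu$ is symmetric about the main diagonal. If $\lambda^c/\mu$ has an odd number of boxes strictly above its main diagonal, then its sign-imbalance is zero.
   Context: Partitions are identified with Young diagrams (sets of boxes $(i,j)$, row $i$, column $j$, with $\lambda_i$ boxes in row $i$). The complement is $\lambda^c_i=m-\lambda_{m+1-i}$ for $i=1,\dots,m$; $\mu\subset\lambda^c$ means $\mu_i\le\lambda^c_i$ for all $i$, and $\lambda^c/\mu$ is the set of boxes of $\lambda^c$ not in $\mu$. It is symmetric if invariant under $(i,j)\mapsto(j,i)$; a box is above the main diagonal if $j>i$. Partially order the boxes by letting each box be covered by its neighbors immediately to the right and immediately below; a linear extension (standard Young tableau) of shape $\lambda^c/\mu$ with $N$ boxes is a bijection from the boxes to $\{1,\dots,N\}$ increasing along this order. Fixing one linear extension $T_0$, each linear extension $T$ gives a permutation $T\circ T_0^{-1}$ of $\{1,\dots,N\}$; the sign-imbalance is the absolute value of the sum of the signs of these permutations over all linear extensions $T$. *)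

theory Defs
  imports "HOL-Combinatorics.Combinatorics"
begin

text \<open>A partition with at most m parts, each at most m, is encoded as a function
  nat to nat, its i-th part being lam i for i = 1..m (the value at 0 is irrelevant).\<close>
definition partition_in_box :: "nat \<Rightarrow> (nat \<Rightarrow> nat) \<Rightarrow> bool" where
  "partition_in_box m lam \<longleftrightarrow>
     (\<forall>i j. 1 \<le> i \<longrightarrow> i \<le> j \<longrightarrow> lam j \<le> lam i) \<and>
     (\<forall>i. lam i \<le> m) \<and> (\<forall>i. m < i \<longrightarrow> lam i = 0)"

definition part_compl :: "nat \<Rightarrow> (nat \<Rightarrow> nat) \<Rightarrow> nat \<Rightarrow> nat" where
  "part_compl m lam i = (if 1 \<le> i \<and> i \<le> m then m - lam (m + 1 - i) else 0)"

definition part_subset :: "nat \<Rightarrow> (nat \<Rightarrow> nat) \<Rightarrow> (nat \<Rightarrow> nat) \<Rightarrow> bool" where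
  "part_subset m mu nu \<longleftrightarrow> (\<forall>i\<in>{1..m}. mu i \<le> nu i)"

definition skew_boxes :: "nat \<Rightarrow> (nat \<Rightarrow> nat) \<Rightarrow> (nat \<Rightarrow> nat) \<Rightarrow> (nat \<times> nat) set" where
  "skew_boxes m nu mu = {(i, j). 1 \<le> i \<and> i \<le> m \<and> mu i < j \<and> j \<le> nu i}"

definition symmetric_shape :: "(nat \<times> nat) set \<Rightarrow> bool" where
  "symmetric_shape S \<longleftrightarrow> (\<forall>i j. (i, j) \<in> S \<longrightarrow> (j, i) \<in> S)"

definition boxes_above_diag :: "(nat \<times> nat) set \<Rightarrow> (nat \<times> nat) set" where
  "boxes_above_diag S = {(i, j) \<in> S. i < j}"

text \<open>Linear extensions (standard Young tableaux) of a finite set of boxes S,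
  as bijections S \<rightarrow> {1..card S} increasing along the covering relations
  (right neighbour and lower neighbour); normalised to 0 outside S.\<close>
definition lin_ext :: "(nat \<times> nat) set \<Rightarrow> ((nat \<times> nat) \<Rightarrow> nat) set" where
  "lin_ext S = {T. bij_betw T S {1..card S} \<and> (\<forall>x. x \<notin> S \<longrightarrow> T x = 0) \<and>
      (\<forall>i j. (i, j) \<in> S \<longrightarrow> (i, Suc j) \<in> S \<longrightarrow> T (i, j) < T (i, Suc j)) \<and>
      (\<forall>i j. (i, j) \<in> S \<longrightarrow> (Suc i, j) \<in> S \<longrightarrow> T (i, j) < T (Suc i, j))}"

definition tab_perm :: "(nat \<times> nat) set \<Rightarrow> ((nat \<times> nat) \<Rightarrow> nat) \<Rightarrow> ((nat \<times> nat) \<Rightarrow> nat) \<Rightarrow> nat \<Rightarrow> nat" where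
  "tab_perm S T T0 k = (if k \<in> {1..card S} then T (inv_into S T0 k) else k)"

definition sign_imbalance :: "(nat \<times> nat) set \<Rightarrow> ((nat \<times> nat) \<Rightarrow> nat) \<Rightarrow> int" where
  "sign_imbalance S T0 = \<bar>\<Sum>T\<in>lin_ext S. sign (tab_perm S T T0)\<bar>"

end

theory Submission
  imports Defs
begin

text \<open>Reflecting a tableau in the main diagonal, T \<mapsto> T \<circ> prod.swap, is an involution on the
  linear extensions of a symmetric shape. Relative to T0 it multiplies the associated permutation
  by the label permutation exchanging T0 x and T0 (swap x) for every box x above the diagonal, a
  product of that many disjoint transpositions. When their number is odd the involution reverses
  signs, so the signed sum over all linear extensions vanishes.\<close>

lemma sum_eq_0_if_sign_reversing_bij:
  fixes f :: "'a \<Rightarrow> 'b::linordered_ab_group_add"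
  assumes "bij_betw g A A" and "\<And>x. x \<in> A \<Longrightarrow> f (g x) = - f x"
  shows "sum f A = 0"
proof -
  have "sum f A = sum (f \<circ> g) A"
    using sum.reindex_bij_betw[OF assms(1), of f] by simp
  also have "\<dots> = - sum f A"
    using assms(2) by (simp add: sum_negf[symmetric])
  finally show ?thesis by simp
qed

lemma symmetric_shape_swap:
  "symmetric_shape S \<Longrightarrow> x \<in> S \<Longrightarrow> prod.swap x \<in> S"
  by (cases x) (auto simp: symmetric_shape_def)

lemma bij_betw_swap_symmetric_shape:
  "symmetric_shape S \<Longrightarrow> bij_betw prod.swap S S"
  by (rule bij_betw_byWitness[where f' = prod.swap]) (auto simp: symmetric_shape_def)

lemma lin_ext_transpose:
  assumes sym: "symmetric_shape S" and T: "T \<in> lin_ext S"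
  shows "T \<circ> prod.swap \<in> lin_ext S"
proof -
  have sw: "(j, i) \<in> S" if "(i, j) \<in> S" for i j
    using sym that by (simp add: symmetric_shape_def)
  have "bij_betw (T \<circ> prod.swap) S {1..card S}"
    using bij_betw_swap_symmetric_shape[OF sym] T by (auto simp: lin_ext_def intro: bij_betw_trans)
  moreover have "(T \<circ> prod.swap) x = 0" if "x \<notin> S" for x
    using T that sw by (cases x) (auto simp: lin_ext_def)
  ultimately show ?thesis
    using T sw by (auto simp: lin_ext_def)
qed

lemma tab_perm_permutes:
  assumes T: "bij_betw T S {1..card S}" and T0: "bij_betw T0 S {1..card S}"
  shows "tab_perm S T T0 permutes {1..card S}"
proof (rule bij_imp_permutes)
  have "bij_betw (T \<circ> inv_into S T0) {1..card S} {1..card S}"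
    using bij_betw_inv_into[OF T0] T by (rule bij_betw_trans)
  moreover have "bij_betw (tab_perm S T T0) {1..card S} {1..card S} \<longleftrightarrow>
      bij_betw (T \<circ> inv_into S T0) {1..card S} {1..card S}"
    by (rule bij_betw_cong) (simp add: tab_perm_def)
  ultimately show "bij_betw (tab_perm S T T0) {1..card S} {1..card S}" by simp
  show "\<And>x. x \<notin> {1..card S} \<Longrightarrow> tab_perm S T T0 x = x"
    by (auto simp: tab_perm_def)
qed

text \<open>For A the boxes above the diagonal this is tab_perm S (T0 \<circ> prod.swap) T0.\<close>
definition label_swap ::
    "((nat \<times> nat) \<Rightarrow> nat) \<Rightarrow> (nat \<times> nat) set \<Rightarrow> (nat \<times> nat) set \<Rightarrow> nat \<Rightarrow> nat" where
  "label_swap T0 S A k =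
     (if k \<in> T0 ` (A \<union> prod.swap ` A) then T0 (prod.swap (inv_into S T0 k)) else k)"

lemma label_swap_label:
  "inj_on T0 S \<Longrightarrow> x \<in> S \<Longrightarrow> x \<in> A \<union> prod.swap ` A \<Longrightarrow>
    label_swap T0 S A (T0 x) = T0 (prod.swap x)"
  by (simp add: label_swap_def)

lemma label_swap_outside:
  "k \<notin> T0 ` (A \<union> prod.swap ` A) \<Longrightarrow> label_swap T0 S A k = k"
  by (simp add: label_swap_def)

lemma label_swap_empty: "label_swap T0 S {} = id"
  by (auto simp: label_swap_def)

lemma label_swap_insert:
  assumes inj: "inj_on T0 S" and sym: "symmetric_shape S"
    and a: "a \<in> boxes_above_diag S" and A: "A \<subseteq> boxes_above_diag S" and "a \<notin> A"
  shows "label_swap T0 S (insert a A) =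
           Transposition.transpose (T0 a) (T0 (prod.swap a)) \<circ> label_swap T0 S A"
proof
  fix k
  define B where "B = A \<union> prod.swap ` A"
  have above: "x \<in> S \<and> fst x < snd x" if "x \<in> boxes_above_diag S" for x
    using that by (cases x) (auto simp: boxes_above_diag_def)
  have aS: "a \<in> S" and a_above: "fst a < snd a" using above[OF a] by auto
  have saS: "prod.swap a \<in> S" using symmetric_shape_swap[OF sym aS] .
  have BS: "B \<subseteq> S" using A above symmetric_shape_swap[OF sym] by (auto simp: B_def)
  have swap_A_below: "snd x < fst x" if "x \<in> prod.swap ` A" for x
    using that A above by auto
  have aB: "a \<notin> B" using \<open>a \<notin> A\<close> a_above swap_A_below by (force simp: B_def)
  have saB: "prod.swap a \<notin> B"
  proof
    assume "prod.swap a \<in> B"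
    then have "a \<in> A \<or> prod.swap a \<in> A" by (cases a) (auto simp: B_def)
    then show False using \<open>a \<notin> A\<close> a_above A above by fastforce
  qed
  have B': "insert a A \<union> prod.swap ` insert a A = insert a (insert (prod.swap a) B)"
    by (auto simp: B_def)
  consider (B) b where "b \<in> B" "k = T0 b" | (a) "k = T0 a" | (sa) "k = T0 (prod.swap a)"
    | (none) "k \<notin> T0 ` insert a (insert (prod.swap a) B)"
    by blast
  then show "label_swap T0 S (insert a A) k =
               (Transposition.transpose (T0 a) (T0 (prod.swap a)) \<circ> label_swap T0 S A) k"
  proof cases
    case (B b)
    have "prod.swap b \<in> B" and "b \<in> S" using \<open>b \<in> B\<close> BS by (auto simp: B_def)
    then have "T0 (prod.swap b) \<noteq> T0 a" "T0 (prod.swap b) \<noteq> T0 (prod.swap a)"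
      using inj aS saS aB saB BS by (metis inj_on_eq_iff subsetD)+
    then show ?thesis
      using B \<open>b \<in> S\<close> inj by (simp add: label_swap_label B' B_def[symmetric] transpose_def)
  next
    case a
    moreover have "T0 a \<notin> T0 ` B" using inj aS aB BS by (simp add: inj_on_image_mem_iff)
    ultimately show ?thesis
      using inj aS by (simp add: label_swap_label label_swap_outside B' B_def[symmetric])
  next
    case sa
    moreover have "T0 (prod.swap a) \<notin> T0 ` B" using inj saS saB BS by (simp add: inj_on_image_mem_iff)
    ultimately show ?thesis
      using inj saS by (simp add: label_swap_label label_swap_outside B' B_def[symmetric])
  next
    case none
    then show ?thesis by (simp add: label_swap_outside B' B_def[symmetric])
  qed
qed

lemma label_swap_sign:
  assumes inj: "inj_on T0 S" and sym: "symmetric_shape S"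
    and "finite A" and "A \<subseteq> boxes_above_diag S"
  shows "permutation (label_swap T0 S A) \<and> sign (label_swap T0 S A) = (-1) ^ card A"
  using \<open>finite A\<close> \<open>A \<subseteq> boxes_above_diag S\<close>
proof (induction A rule: finite_induct)
  case empty
  then show ?case by (simp add: label_swap_empty permutation_id)
next
  case (insert a A)
  let ?t = "Transposition.transpose (T0 a) (T0 (prod.swap a))"
  have "a \<in> S" "fst a < snd a"
    using insert.prems by (cases a, auto simp: boxes_above_diag_def)+
  then have "T0 a \<noteq> T0 (prod.swap a)"
    using inj symmetric_shape_swap[OF sym] by (cases a) (auto dest: inj_onD)
  then have "sign ?t = -1" by (simp add: sign_swap_id)
  have IH: "permutation (label_swap T0 S A)" "sign (label_swap T0 S A) = (-1) ^ card A"
    using insert by auto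
  have "permutation (?t \<circ> label_swap T0 S A)"
    by (rule permutation_compose[OF permutation_swap_id IH(1)])
  moreover have "sign (?t \<circ> label_swap T0 S A) = (-1) ^ card (insert a A)"
    using sign_compose[OF permutation_swap_id IH(1)] \<open>sign ?t = -1\<close> IH(2) insert(1,2)
    by simp
  moreover have "label_swap T0 S (insert a A) = ?t \<circ> label_swap T0 S A"
    using label_swap_insert[OF inj sym] insert by blast
  ultimately show ?case by (simp only:)
qed

lemma tab_perm_transpose:
  assumes T0: "bij_betw T0 S {1..card S}" and sym: "symmetric_shape S"
  shows "tab_perm S (T \<circ> prod.swap) T0 =
           tab_perm S T T0 \<circ> label_swap T0 S (boxes_above_diag S)"
proof
  fix k
  define A where "A = boxes_above_diag S"
  have inj: "inj_on T0 S" and img: "T0 ` S = {1..card S}"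
    using T0 by (auto simp: bij_betw_def)
  have AS: "A \<union> prod.swap ` A \<subseteq> S"
    using symmetric_shape_swap[OF sym] by (auto simp: A_def boxes_above_diag_def)
  show "tab_perm S (T \<circ> prod.swap) T0 k = (tab_perm S T T0 \<circ> label_swap T0 S A) k"
  proof (cases "k \<in> {1..card S}")
    case True
    then obtain x where x: "x \<in> S" "k = T0 x" using img by (metis imageE)
    have sx: "prod.swap x \<in> S" using symmetric_shape_swap[OF sym x(1)] .
    show ?thesis
    proof (cases "fst x = snd x")
      case True
      then have "prod.swap x = x" "x \<notin> A \<union> prod.swap ` A"
        by (cases x, auto simp: A_def boxes_above_diag_def)+
      then show ?thesis
        using x inj AS by (simp add: tab_perm_def label_swap_outside inj_on_image_mem_iff)
    next
      case False
      then have "x \<in> A \<union> prod.swap ` A"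
        using x sx by (cases x) (auto simp: A_def boxes_above_diag_def image_iff)
      then show ?thesis
        using x sx inj img by (auto simp: tab_perm_def label_swap_label)
    qed
  next
    case False
    then have "k \<notin> T0 ` (A \<union> prod.swap ` A)" using AS img by blast
    then show ?thesis using False by (auto simp: tab_perm_def label_swap_outside)
  qed
qed

lemma sign_imbalance_eq_0_if_odd_above_diag:
  assumes "finite S" and sym: "symmetric_shape S"
    and odd: "odd (card (boxes_above_diag S))" and T0: "T0 \<in> lin_ext S"
  shows "sign_imbalance S T0 = 0"
proof -
  let ?\<sigma> = "label_swap T0 S (boxes_above_diag S)"
  have T0b: "bij_betw T0 S {1..card S}" using T0 by (simp add: lin_ext_def)
  have "boxes_above_diag S \<subseteq> S" by (auto simp: boxes_above_diag_def)
  then have \<sigma>: "permutation ?\<sigma> \<and> sign ?\<sigma> = -1"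
    using label_swap_sign[OF bij_betw_imp_inj_on[OF T0b] sym] \<open>finite S\<close> odd
    by (simp add: finite_subset)
  have "bij_betw (\<lambda>T. T \<circ> prod.swap) (lin_ext S) (lin_ext S)"
    by (rule bij_betw_byWitness[where f' = "\<lambda>T. T \<circ> prod.swap"])
      (auto simp: comp_assoc intro: lin_ext_transpose[OF sym])
  moreover have "sign (tab_perm S (T \<circ> prod.swap) T0) = - sign (tab_perm S T T0)"
    if "T \<in> lin_ext S" for T
  proof -
    have "bij_betw T S {1..card S}" using that by (simp add: lin_ext_def)
    then have "tab_perm S T T0 permutes {1..card S}" by (rule tab_perm_permutes[OF _ T0b])
    then have "permutation (tab_perm S T T0)"
      by (rule permutes_imp_permutation[OF finite_atLeastAtMost])
    then show ?thesis
      using \<sigma> by (simp add: tab_perm_transpose[OF T0b sym] sign_compose)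
  qed
  ultimately show ?thesis
    unfolding sign_imbalance_def by (simp add: sum_eq_0_if_sign_reversing_bij)
qed

lemma finite_skew_boxes: "finite (skew_boxes m nu mu)"
  by (rule finite_subset[of _ "SIGMA i:{1..m}. {..nu i}"]) (auto simp: skew_boxes_def)

theorem lemma4p9:
  fixes m :: nat and lam mu :: "nat \<Rightarrow> nat"
  assumes "partition_in_box m lam"
    and "partition_in_box m mu"
    and "part_subset m mu (part_compl m lam)"
    and "symmetric_shape (skew_boxes m (part_compl m lam) mu)"
    and "odd (card (boxes_above_diag (skew_boxes m (part_compl m lam) mu)))"
  shows "\<forall>T0\<in>lin_ext (skew_boxes m (part_compl m lam) mu).
           sign_imbalance (skew_boxes m (part_compl m lam) mu) T0 = 0"
  \<comment> \<open>Only symmetry and parity matter: the argument works for any finite symmetric set of boxes.\<close>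
  by (intro ballI sign_imbalance_eq_0_if_odd_above_diag[OF finite_skew_boxes assms(4,5)])

end
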